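(* Let $d\ge2$ and $k>p\ge1$ be integers. If $T$ is chosen uniformly at random from $\mathcal{C}_k^{(d)}$, then the probability that each of the generations $1,2,\dots,p$ of $T$ contains at most one internal vertex is at least $e^{-p}$.
   Context: A $d$-Catalan tree is a rooted planar tree in which each vertex has $0$ or $d$ children (those with $d$ children are internal); $\mathcal{C}_k^{(d)}$ is the set of such trees with $k$ internal vertices. Generation $j$ is the set of vertices at graph distance $j$ from the root. *)

theory Defs
  imports Complex_Main
begin

datatype ptree = Leaf | Node "ptree list"

fun internal :: "ptree \<Rightarrow> bool" where
  "internal Leaf = False"
| "internal (Node ts) = (ts \<noteq> [])"

fun dary :: "nat \<Rightarrow> ptree \<Rightarrow> bool" where
  "dary d Leaf = True"
| "dary d (Node ts) = ((ts = [] \<or> length ts = d) \<and> (\<forall>t\<in>set ts. dary d t))"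

fun num_internal :: "ptree \<Rightarrow> nat" where
  "num_internal Leaf = 0"
| "num_internal (Node ts) = (if ts = [] then 0 else 1) + sum_list (map num_internal ts)"

fun internal_at :: "nat \<Rightarrow> ptree \<Rightarrow> nat" where
  "internal_at 0 t = (if internal t then 1 else 0)"
| "internal_at (Suc j) Leaf = 0"
| "internal_at (Suc j) (Node ts) = sum_list (map (internal_at j) ts)"

definition catalan_trees :: "nat \<Rightarrow> nat \<Rightarrow> ptree set" where
  "catalan_trees d k = {t. dary d t \<and> num_internal t = k}"

end

theory Submission
  imports Defs
begin

text \<open>
  Let C_m be the set of d-Catalan trees with m internal vertices.  Counting forests by
  the first tree gives |C_m| explicitly: it is the Fuss--Catalan number times
  2^((d-1) m + 1), since the datatype has two kinds of leaves.  Hence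
  |C_(m+1)| / |C_m| \<le> d 2^(d-1) (1 + 1/(d-1))^(d-1) \<le> e d 2^(d-1).  Conversely, making a
  tree of C_m the i-th child of a new root whose other d - 1 children are leaves is
  injective and shifts all generations down by one, the new generation 1 containing a single
  internal vertex.  Iterating p times from m = k - p \<ge> 1, at least
  (d 2^(d-1))^p |C_m| \<ge> e^(-p) |C_k| trees of C_k have at most one internal vertex in
  each of the generations 1, ..., p.\<close>

text \<open>Since \<^term>\<open>Leaf\<close> and \<^term>\<open>Node []\<close> are two different leaves, this is the
  Fuss--Catalan number \<open>r / (d m + r) * binomial (d m + r) m\<close> of forests of \<open>r\<close>
  \<open>d\<close>-ary trees with \<open>m\<close> internal vertices, multiplied by 2 to the number
  \<open>(d - 1) m + r\<close> of their leaves.\<close>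
definition forest_count :: "nat \<Rightarrow> nat \<Rightarrow> nat \<Rightarrow> real" where
  "forest_count d r m =
     2 ^ ((d - 1) * m + r) * r * fact (d * m + r - 1) / (fact m * fact ((d - 1) * m + r))"

lemma forest_count_pos: "0 < r \<Longrightarrow> 0 < forest_count d r m"
  unfolding forest_count_def by (intro divide_pos_pos mult_pos_pos fact_gt_zero) auto

lemma forest_count_0: "0 < r \<Longrightarrow> forest_count d r 0 = 2 ^ r"
  by (cases r) (simp_all add: forest_count_def)

lemma forest_count_0_Suc: "forest_count d 0 (Suc m) = 0"
  by (simp add: forest_count_def)

lemma forest_count_Suc:
  "forest_count (Suc c) r m = 2 ^ (c * m + r) * r * fact (Suc c * m + r - 1) / (fact m * fact (c * m + r))"
  by (simp add: forest_count_def)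

lemma forest_count_Suc_Suc:
  assumes "d \<ge> 1"
  shows "forest_count d (Suc r) (Suc m) = 2 * forest_count d r (Suc m) + forest_count d (r + d) m"
proof -
  obtain c where d: "d = Suc c" using assms by (cases d) auto
  have fc: "forest_count d r' m' =
      2 ^ (c * m' + r') * r' * fact (Suc c * m' + r' - 1) / (fact m' * fact (c * m' + r'))" for r' m'
    unfolding d by (rule forest_count_Suc)
  define N where "N = Suc c * m + c + r"
  define Q where "Q = c * m + c + r"
  define G :: real where "G = 2 ^ Q * fact N / (fact m * fact Q)"
  have lhs: "forest_count d (Suc r) (Suc m)
      = G * 2 * (real r + 1) * (real N + 1) / ((real m + 1) * (real Q + 1))"
  proof -
    have "Suc c * Suc m + Suc r - 1 = Suc N" "c * Suc m + Suc r = Suc Q" by (simp_all add: N_def Q_def)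
    then show ?thesis unfolding fc G_def by (simp add: field_simps)
  qed
  have mid: "forest_count d r (Suc m) = G * real r / (real m + 1)"
  proof (cases r)
    case 0 then show ?thesis by (simp add: fc)
  next
    case (Suc s)
    have "Suc c * Suc m + r - 1 = N" "c * Suc m + r = Q" by (simp_all add: N_def Q_def Suc)
    then show ?thesis unfolding fc G_def by (simp add: field_simps)
  qed
  have rhs: "forest_count d (r + d) m = G * 2 * (real r + real c + 1) / (real Q + 1)"
  proof -
    have "Suc c * m + (r + d) - 1 = N" "c * m + (r + d) = Suc Q" by (simp_all add: N_def Q_def d)
    then show ?thesis unfolding fc by (simp only:) (simp add: G_def d field_simps)
  qed
  have "(real r + 1) * (real N + 1) = real r * (real Q + 1) + (real r + real c + 1) * (real m + 1)"
    by (simp add: N_def Q_def algebra_simps)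
  then have "G * 2 * ((real r + 1) * (real N + 1))
      = G * 2 * (real r * (real Q + 1)) + G * 2 * ((real r + real c + 1) * (real m + 1))"
    by (simp add: algebra_simps)
  then show ?thesis
    unfolding lhs mid rhs by (simp add: field_simps)
qed

definition leaf_trees :: "ptree set" where
  "leaf_trees = {Leaf, Node []}"

lemma finite_leaf_trees: "finite leaf_trees"
  and card_leaf_trees: "card leaf_trees = 2"
  by (simp_all add: leaf_trees_def)

lemma leaf_trees_iff: "t \<in> leaf_trees \<longleftrightarrow> dary d t \<and> num_internal t = 0"
  by (cases t) (auto simp: leaf_trees_def)

lemma internal_at_leaf_trees: "t \<in> leaf_trees \<Longrightarrow> internal_at j t = 0"
  by (cases j) (auto simp: leaf_trees_def)

definition forests :: "nat \<Rightarrow> nat \<Rightarrow> nat \<Rightarrow> ptree list set" where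
  "forests d r m =
     {ts. length ts = r \<and> (\<forall>t\<in>set ts. dary d t) \<and> sum_list (map num_internal ts) = m}"

lemma forests_0: "forests d r 0 = {ts. set ts \<subseteq> leaf_trees \<and> length ts = r}"
  unfolding forests_def by (auto simp: sum_list_eq_0_iff leaf_trees_iff[of _ d])

lemma forests_0_Suc: "forests d 0 (Suc m) = {}"
  by (simp add: forests_def)

lemma dary_cases:
  assumes "dary d t"
  obtains "t \<in> leaf_trees"
    | cs where "t = Node cs" "length cs = d" "\<forall>c\<in>set cs. dary d c" "cs \<noteq> []"
  using assms by (cases t) (auto simp: leaf_trees_def)

lemma Node_take_drop_in_forests:
  assumes "d \<ge> 1" and us: "us \<in> forests d (r + d) m"
  shows "Node (take d us) # drop d us \<in> forests d (Suc r) (Suc m)"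
proof -
  let ?cs = "take d us" and ?rest = "drop d us"
  have "length ?cs = d" "?cs \<noteq> []" "length ?rest = r"
    using us assms(1) by (auto simp: forests_def)
  moreover have "\<forall>x\<in>set ?cs. dary d x" "\<forall>x\<in>set ?rest. dary d x"
    using us by (auto simp: forests_def dest: in_set_takeD in_set_dropD)
  moreover have "sum_list (map num_internal ?cs) + sum_list (map num_internal ?rest) = m"
    using us by (simp add: forests_def flip: map_append sum_list_append)
  ultimately show ?thesis
    by (simp add: forests_def)
qed

lemma forests_Suc_Suc:
  assumes "d \<ge> 1"
  shows "forests d (Suc r) (Suc m) =
           (\<lambda>(t, ts). t # ts) ` (leaf_trees \<times> forests d r (Suc m))
         \<union> (\<lambda>us. Node (take d us) # drop d us) ` forests d (r + d) m"
    (is "_ = ?Leaf \<union> ?Node")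
proof (intro equalityI subsetI)
  fix ts assume "ts \<in> forests d (Suc r) (Suc m)"
  then obtain t rest where ts: "ts = t # rest" and t: "dary d t" and rest: "length rest = r"
      "\<forall>x\<in>set rest. dary d x" "num_internal t + sum_list (map num_internal rest) = Suc m"
    unfolding forests_def by (cases ts) auto
  from t show "ts \<in> ?Leaf \<union> ?Node"
  proof (cases rule: dary_cases)
    case 1
    then have "rest \<in> forests d r (Suc m)"
      using rest leaf_trees_iff[of t d] by (simp add: forests_def)
    then have "ts \<in> ?Leaf" using 1 ts by (simp add: image_iff)
    then show ?thesis ..
  next
    case (2 cs)
    then have "cs @ rest \<in> forests d (r + d) m"
      using rest by (auto simp: forests_def)
    moreover have "ts = Node (take d (cs @ rest)) # drop d (cs @ rest)"
      using 2 ts by simp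
    ultimately have "ts \<in> ?Node" by (rule rev_image_eqI)
    then show ?thesis ..
  qed
next
  fix ts assume "ts \<in> ?Leaf \<union> ?Node"
  then show "ts \<in> forests d (Suc r) (Suc m)"
  proof
    assume "ts \<in> ?Leaf"
    then obtain t rest where "ts = t # rest" "t \<in> leaf_trees" "rest \<in> forests d r (Suc m)"
      by auto
    then show ?thesis by (simp add: forests_def leaf_trees_iff[of _ d])
  next
    assume "ts \<in> ?Node"
    then show ?thesis
      using Node_take_drop_in_forests[OF assms] by blast
  qed
qed

lemma finite_forests:
  assumes "d \<ge> 1"
  shows "finite (forests d r m)"
proof (induction m arbitrary: r)
  case 0
  show ?case unfolding forests_0 by (rule finite_lists_length_eq[OF finite_leaf_trees])
next
  case (Suc m)
  note outer_IH = Suc.IH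
  show ?case
  proof (induction r)
    case 0
    show ?case by (simp add: forests_0_Suc)
  next
    case (Suc r)
    then show ?case
      unfolding forests_Suc_Suc[OF assms]
      by (intro finite_UnI finite_imageI finite_cartesian_product finite_leaf_trees outer_IH)
  qed
qed

lemma card_forests_Suc_Suc:
  assumes "d \<ge> 1"
  shows "card (forests d (Suc r) (Suc m)) = 2 * card (forests d r (Suc m)) + card (forests d (r + d) m)"
proof -
  let ?Leaf = "(\<lambda>(t, ts). t # ts) ` (leaf_trees \<times> forests d r (Suc m))"
  let ?Node = "(\<lambda>us. Node (take d us) # drop d us) ` forests d (r + d) m"
  have "?Leaf \<inter> ?Node = {}"
    using assms by (fastforce simp: leaf_trees_def forests_def)
  moreover have "card ?Leaf = 2 * card (forests d r (Suc m))"
    by (subst card_image) (auto simp: inj_on_def card_cartesian_product card_leaf_trees)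
  moreover have "card ?Node = card (forests d (r + d) m)"
    by (rule card_image, rule inj_onI) (metis append_take_drop_id list.inject ptree.inject)
  ultimately show ?thesis
    unfolding forests_Suc_Suc[OF assms]
    by (simp add: card_Un_disjoint finite_forests[OF assms] finite_leaf_trees)
qed

lemma card_forests:
  assumes "d \<ge> 1" and "0 < r"
  shows "real (card (forests d r m)) = forest_count d r m"
  using assms(2)
proof (induction m arbitrary: r)
  case 0
  then show ?case
    by (simp add: forests_0 card_lists_length_eq[OF finite_leaf_trees] card_leaf_trees forest_count_0)
next
  case (Suc m)
  note outer_IH = Suc.IH
  show ?case
  proof (induction r)
    case 0
    show ?case by (simp add: forests_0_Suc forest_count_0_Suc)
  next
    case (Suc r)
    then show ?case
      using outer_IH[of "r + d"] assms(1)
      by (simp add: card_forests_Suc_Suc forest_count_Suc_Suc)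
  qed
qed

lemma bij_betw_catalan_trees_forests: "bij_betw (\<lambda>t. [t]) (catalan_trees d m) (forests d 1 m)"
  by (rule bij_betw_byWitness[where f' = hd])
     (auto simp: catalan_trees_def forests_def length_Suc_conv)

lemma finite_catalan_trees: "d \<ge> 1 \<Longrightarrow> finite (catalan_trees d m)"
  using bij_betw_finite[OF bij_betw_catalan_trees_forests] finite_forests by blast

lemma card_catalan_trees: "d \<ge> 1 \<Longrightarrow> real (card (catalan_trees d m)) = forest_count d 1 m"
  using bij_betw_same_card[OF bij_betw_catalan_trees_forests] card_forests by simp

lemma card_catalan_trees_pos: "d \<ge> 1 \<Longrightarrow> 0 < card (catalan_trees d m)"
  using card_catalan_trees[of d m] forest_count_pos[of 1 d m] by simp

text \<open>Each of the \<open>j\<close> factors \<open>((c + 1) m + i + 1) / (c m + i + 2)\<close> is at most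
  \<open>(c + 1) / c\<close>.\<close>
lemma fact_ratio_le:
  "c ^ j * fact ((c + 1) * m + j) * fact (c * m + 1)
     \<le> (c + 1) ^ j * fact ((c + 1) * m) * (fact (c * m + 1 + j) :: nat)"
proof (induction j)
  case 0
  then show ?case by simp
next
  case (Suc j)
  have "c * ((c + 1) * m + j + 1) \<le> (c + 1) * (c * m + 1 + j + 1)"
    by (simp add: algebra_simps)
  then have "(c * ((c + 1) * m + j + 1)) * (c ^ j * fact ((c + 1) * m + j) * fact (c * m + 1))
      \<le> ((c + 1) * (c * m + 1 + j + 1)) * ((c + 1) ^ j * fact ((c + 1) * m) * fact (c * m + 1 + j))"
    using Suc.IH by (rule mult_mono) auto
  then show ?case by (simp add: algebra_simps)
qed

lemma fact_quotient_le_exp: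
  assumes "c \<ge> 1"
  shows "fact ((c + 1) * m + c) / fact (c * m + 1 + c)
           \<le> exp 1 * (fact ((c + 1) * m) / (fact (c * m + 1) :: real))"
proof -
  define A where "A = (fact ((c + 1) * m + c) :: real)"
  define B where "B = (fact (c * m + 1 + c) :: real)"
  define C where "C = (fact ((c + 1) * m) :: real)"
  define D where "D = (fact (c * m + 1) :: real)"
  have pos: "A > 0" "B > 0" "C > 0" "D > 0" unfolding A_def B_def C_def D_def by (rule fact_gt_zero)+
  have "real (c ^ c * fact ((c + 1) * m + c) * fact (c * m + 1))
      \<le> real ((c + 1) ^ c * fact ((c + 1) * m) * fact (c * m + 1 + c))"
    using fact_ratio_le[of c c m] by (simp only: of_nat_le_iff)
  then have "real c ^ c * A * D \<le> (real c + 1) ^ c * C * B"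
    unfolding A_def B_def C_def D_def by (simp only: of_nat_mult of_nat_power of_nat_fact of_nat_add of_nat_1)
  then have "A / B \<le> ((real c + 1) / real c) ^ c * (C / D)"
    using pos assms by (simp add: power_divide divide_simps) (simp add: ac_simps)
  also have "\<dots> \<le> exp 1 * (C / D)"
    using exp_ge_one_plus_x_over_n_power_n[of c 1] pos assms
    by (intro mult_right_mono) (auto simp: field_simps)
  finally show ?thesis unfolding A_def B_def C_def D_def .
qed

lemma card_catalan_trees_Suc_le:
  assumes "d \<ge> 2"
  shows "real (card (catalan_trees d (Suc m)))
           \<le> exp 1 * real d * 2 ^ (d - 1) * real (card (catalan_trees d m))"
proof -
  obtain c where d: "d = Suc c" and c: "c \<ge> 1" using assms by (cases d) auto
  define A where "A = (fact ((c + 1) * m + c) :: real)"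
  define B where "B = (fact (c * m + 1 + c) :: real)"
  have "B > 0" unfolding B_def by (rule fact_gt_zero)
  have "Suc c * Suc m + 1 - 1 = Suc ((c + 1) * m + c)" "c * Suc m + 1 = c * m + 1 + c" by simp_all
  then have "forest_count d 1 (Suc m)
      = 2 ^ (c * m + 1 + c) * (real (Suc ((c + 1) * m + c)) * A) / ((real (Suc m) * fact m) * B)"
    unfolding d forest_count_Suc A_def B_def by (simp only: fact_Suc)
  also have "\<dots> = 2 ^ c * (real c + 1) * (2 ^ (c * m + 1) / fact m) * (A / B)"
  proof -
    have "real (Suc ((c + 1) * m + c)) = (real c + 1) * real (Suc m)" by (simp add: algebra_simps)
    then show ?thesis using \<open>B > 0\<close> by (simp add: power_add field_simps del: of_nat_Suc)
  qed
  also have "\<dots> \<le> 2 ^ c * (real c + 1) * (2 ^ (c * m + 1) / fact m)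
                   * (exp 1 * (fact ((c + 1) * m) / fact (c * m + 1)))"
    unfolding A_def B_def using fact_quotient_le_exp[OF c] by (intro mult_left_mono) auto
  also have "\<dots> = exp 1 * real d * 2 ^ (d - 1) * forest_count d 1 m"
    unfolding d forest_count_Suc by (simp add: mult_ac)
  finally show ?thesis
    using assms by (simp add: card_catalan_trees)
qed

lemma card_catalan_trees_add_le:
  assumes "d \<ge> 2"
  shows "real (card (catalan_trees d (m + p)))
           \<le> (exp 1 * real d * 2 ^ (d - 1)) ^ p * real (card (catalan_trees d m))"
proof (induction p)
  case 0
  then show ?case by simp
next
  case (Suc p)
  have "real (card (catalan_trees d (m + Suc p)))
      \<le> exp 1 * real d * 2 ^ (d - 1) * real (card (catalan_trees d (m + p)))"
    using card_catalan_trees_Suc_le[OF assms, of "m + p"] by simp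
  also have "\<dots> \<le> exp 1 * real d * 2 ^ (d - 1)
                   * ((exp 1 * real d * 2 ^ (d - 1)) ^ p * real (card (catalan_trees d m)))"
    using Suc.IH by (intro mult_left_mono) auto
  finally show ?case by (simp add: algebra_simps)
qed

definition thin_catalan_trees :: "nat \<Rightarrow> nat \<Rightarrow> nat \<Rightarrow> ptree set" where
  "thin_catalan_trees d p k = {t \<in> catalan_trees d k. \<forall>j\<in>{1..p}. internal_at j t \<le> 1}"

definition graft :: "nat \<Rightarrow> ptree list \<Rightarrow> ptree \<Rightarrow> ptree" where
  "graft i ys c = Node (take i ys @ c # drop i ys)"

lemma num_internal_graft:
  "set ys \<subseteq> leaf_trees \<Longrightarrow> num_internal (graft i ys c) = Suc (num_internal c)"
  by (auto simp: graft_def sum_list_eq_0_iff leaf_trees_def dest: in_set_takeD in_set_dropD)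

lemma internal_at_Suc_graft:
  "set ys \<subseteq> leaf_trees \<Longrightarrow> internal_at (Suc j) (graft i ys c) = internal_at j c"
  by (auto simp: graft_def sum_list_eq_0_iff internal_at_leaf_trees dest: in_set_takeD in_set_dropD)

lemma dary_graft:
  assumes "dary d c" "set ys \<subseteq> leaf_trees" "length ys = d - 1" "i < d"
  shows "dary d (graft i ys c)"
proof -
  have "set (take i ys @ c # drop i ys) = insert c (set ys)"
    by (metis append_take_drop_id set_append list.set(2) Un_insert_right)
  then show ?thesis
    using assms leaf_trees_iff[of _ d] by (auto simp: graft_def)
qed

lemma graft_in_thin_catalan_trees:
  assumes "i < d" "set ys \<subseteq> leaf_trees" "length ys = d - 1" "c \<in> thin_catalan_trees d p m"
  shows "graft i ys c \<in> thin_catalan_trees d (Suc p) (Suc m)"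
proof -
  have c: "dary d c" "num_internal c = m" "\<forall>j\<in>{1..p}. internal_at j c \<le> 1"
    using assms(4) by (auto simp: thin_catalan_trees_def catalan_trees_def)
  have "internal_at j (graft i ys c) \<le> 1" if j: "j \<in> {1..Suc p}" for j
  proof -
    obtain j' where j: "j = Suc j'" "j' \<le> p" using j by (cases j) auto
    show ?thesis
      using c(3) j by (cases j') (auto simp: internal_at_Suc_graft assms(2))
  qed
  then show ?thesis
    using assms c by (simp add: thin_catalan_trees_def catalan_trees_def dary_graft num_internal_graft)
qed

lemma leaf_prefix_split:
  assumes "set ys \<subseteq> leaf_trees" and "c \<notin> leaf_trees"
  shows "takeWhile (\<lambda>t. t \<in> leaf_trees) (take i ys @ c # drop i ys) = take i ys"
    and "dropWhile (\<lambda>t. t \<in> leaf_trees) (take i ys @ c # drop i ys) = c # drop i ys"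
proof -
  have "\<forall>t\<in>set (take i ys). t \<in> leaf_trees" using assms(1) by (auto dest: in_set_takeD)
  then show "takeWhile (\<lambda>t. t \<in> leaf_trees) (take i ys @ c # drop i ys) = take i ys"
            "dropWhile (\<lambda>t. t \<in> leaf_trees) (take i ys @ c # drop i ys) = c # drop i ys"
    using assms(2) by simp_all
qed

text \<open>The grafting position is recovered as the length of the maximal prefix of leaves.\<close>
lemma graft_inject:
  assumes i: "i \<le> length ys" "set ys \<subseteq> leaf_trees" "c \<notin> leaf_trees"
    and i': "i' \<le> length ys'" "set ys' \<subseteq> leaf_trees" "c' \<notin> leaf_trees"
  shows "graft i ys c = graft i' ys' c' \<longleftrightarrow> i = i' \<and> ys = ys' \<and> c = c'"
proof
  assume "graft i ys c = graft i' ys' c'"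
  then have L: "take i ys @ c # drop i ys = take i' ys' @ c' # drop i' ys'"
    by (simp add: graft_def)
  have take: "take i ys = take i' ys'"
    using leaf_prefix_split(1)[OF i(2,3), of i] leaf_prefix_split(1)[OF i'(2,3), of i'] L by simp
  have drop: "c # drop i ys = c' # drop i' ys'"
    using leaf_prefix_split(2)[OF i(2,3), of i] leaf_prefix_split(2)[OF i'(2,3), of i'] L by simp
  have "i = i'"
    using arg_cong[OF take, of length] i(1) i'(1) by simp
  moreover have "ys = ys'"
    using take drop by (metis append_take_drop_id list.inject)
  ultimately show "i = i' \<and> ys = ys' \<and> c = c'"
    using drop by simp
qed simp

lemma card_thin_catalan_trees_Suc_ge:
  assumes "d \<ge> 1" and "m \<ge> 1"
  shows "d * 2 ^ (d - 1) * card (thin_catalan_trees d p m) \<le> card (thin_catalan_trees d (Suc p) (Suc m))"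
proof -
  let ?Dom = "{..<d} \<times> {ys. set ys \<subseteq> leaf_trees \<and> length ys = d - 1}
                \<times> thin_catalan_trees d p m"
  let ?graft = "\<lambda>(i, ys, c). graft i ys c"
  have "inj_on ?graft ?Dom"
  proof (rule inj_onI)
    have graftable: "i \<le> length ys \<and> set ys \<subseteq> leaf_trees \<and> c \<notin> leaf_trees"
      if "(i, ys, c) \<in> ?Dom" for i ys c
      using that assms(2) leaf_trees_iff[of c d] by (auto simp: thin_catalan_trees_def catalan_trees_def)
    fix x x' assume x: "x \<in> ?Dom" and x': "x' \<in> ?Dom" and eq: "?graft x = ?graft x'"
    obtain i ys c i' ys' c' where xs: "x = (i, ys, c)" "x' = (i', ys', c')"
      by (metis prod_cases3)
    show "x = x'"
      using eq graftable[OF x[unfolded xs]] graftable[OF x'[unfolded xs]]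
        graft_inject[of i ys c i' ys' c']
      unfolding xs by simp
  qed
  moreover have "?graft ` ?Dom \<subseteq> thin_catalan_trees d (Suc p) (Suc m)"
    using graft_in_thin_catalan_trees by fastforce
  moreover have "finite (thin_catalan_trees d (Suc p) (Suc m))"
    using finite_catalan_trees[OF assms(1)] by (simp add: thin_catalan_trees_def)
  ultimately have "card ?Dom \<le> card (thin_catalan_trees d (Suc p) (Suc m))"
    by (rule card_inj_on_le)
  moreover have "card ?Dom = d * 2 ^ (d - 1) * card (thin_catalan_trees d p m)"
    by (simp add: card_cartesian_product card_lists_length_eq finite_leaf_trees card_leaf_trees)
  ultimately show ?thesis by simp
qed

lemma card_thin_catalan_trees_ge:
  assumes "d \<ge> 1" and "m \<ge> 1"
  shows "(d * 2 ^ (d - 1)) ^ p * card (catalan_trees d m) \<le> card (thin_catalan_trees d p (m + p))"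
proof (induction p)
  case 0
  then show ?case by (simp add: thin_catalan_trees_def)
next
  case (Suc p)
  have "(d * 2 ^ (d - 1)) ^ Suc p * card (catalan_trees d m)
      \<le> d * 2 ^ (d - 1) * card (thin_catalan_trees d p (m + p))"
    using Suc.IH by simp
  also have "\<dots> \<le> card (thin_catalan_trees d (Suc p) (m + Suc p))"
    using card_thin_catalan_trees_Suc_ge[OF assms(1), of "m + p" p] assms(2) by simp
  finally show ?case .
qed

theorem corollary5p3:
  fixes d k p :: nat
  assumes "d \<ge> 2" and "p \<ge> 1" and "k > p"
  shows "real (card {t \<in> catalan_trees d k. \<forall>j\<in>{1..p}. internal_at j t \<le> 1})
           / real (card (catalan_trees d k)) \<ge> exp (- real p)"
proof -
  define m where "m = k - p"
  have m: "m \<ge> 1" and k: "k = m + p" using assms(3) by (simp_all add: m_def)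
  define K where "K = real d * 2 ^ (d - 1)"
  have "exp (- real p) * real (card (catalan_trees d k))
      \<le> exp (- real p) * ((exp 1 * K) ^ p * real (card (catalan_trees d m)))"
    using card_catalan_trees_add_le[OF assms(1), of m p]
    unfolding k K_def by (intro mult_left_mono) (simp_all add: mult.assoc)
  also have "\<dots> = K ^ p * real (card (catalan_trees d m))"
    by (simp add: power_mult_distrib exp_minus exp_of_nat_mult[symmetric])
  also have "\<dots> \<le> real (card (thin_catalan_trees d p k))"
    using card_thin_catalan_trees_ge[of d m p] assms(1) m
    unfolding k K_def of_nat_le_iff[symmetric, where 'a = real] by simp
  finally show ?thesis
    using card_catalan_trees_pos[of d k] assms(1)
    by (simp add: thin_catalan_trees_def pos_le_divide_eq)
qed

end
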